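(* For $S\subseteq\mathbb Z$, let $\mathcal T(S)=\{(i,j)\in\mathbb N_0\times\mathbb N_0: i-j\in S\}$. Then \[\tfrac14|S|^{1/2}\le\mathfrak s(\mathcal T(S))\le|S|^{1/2}.\] In particular, if $S$ is infinite then $\mathcal T(S)$ is not Schur bounded.
   Context: For a pattern $\mathcal P$, $\mathcal S(\mathcal P)$ is the set of matrices supported on $\mathcal P$ with entries of modulus at most $1$, and $\mathfrak s(\mathcal P)=\sup_{X\in\mathcal S(\mathcal P)}\|X\|_m$, where $\|X\|_m$ is the norm of the Schur multiplier $T=[t_{ij}]\mapsto[x_{ij}t_{ij}]$ on $\mathcal B(\ell^2)$. $\mathcal P$ is Schur bounded if every element of $\mathcal S(\mathcal P)$ gives a bounded Schur multiplier. $\mathbb N_0=\{0,1,2,\dots\}$. *)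

theory Defs
  imports Complex_Main "HOL-Library.Extended_Real"
begin

text \<open>The norm of a matrix as an operator on l^2(N_0), computed as the supremum of the
  norms of its finite upper-left sections (value infinity iff the matrix does not
  define a bounded operator).\<close>

definition mat_norm :: "(nat \<Rightarrow> nat \<Rightarrow> complex) \<Rightarrow> ereal" where
  "mat_norm A = (SUP n::nat. SUP xy \<in> {(x, y). (\<Sum>i<n. (cmod (x i))^2) \<le> 1 \<and> (\<Sum>i<n. (cmod (y i))^2) \<le> 1}.
      ereal (cmod (\<Sum>i<n. \<Sum>j<n. cnj (snd xy i) * A i j * fst xy j)))"

definition schur_norm :: "(nat \<Rightarrow> nat \<Rightarrow> complex) \<Rightarrow> ereal" where
  "schur_norm X = (SUP T \<in> {T. mat_norm T \<le> 1}. mat_norm (\<lambda>i j. X i j * T i j))"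

definition schur_class :: "(nat \<times> nat) set \<Rightarrow> (nat \<Rightarrow> nat \<Rightarrow> complex) set" where
  "schur_class P = {X. (\<forall>i j. (i, j) \<notin> P \<longrightarrow> X i j = 0) \<and> (\<forall>i j. cmod (X i j) \<le> 1)}"

definition schur_sup :: "(nat \<times> nat) set \<Rightarrow> ereal" where
  "schur_sup P = (SUP X \<in> schur_class P. schur_norm X)"

definition schur_bounded :: "(nat \<times> nat) set \<Rightarrow> bool" where
  "schur_bounded P \<longleftrightarrow> (\<forall>X \<in> schur_class P. schur_norm X < \<infinity>)"

definition toeplitz_pattern :: "int set \<Rightarrow> (nat \<times> nat) set" where
  "toeplitz_pattern S = {(i, j). int i - int j \<in> S}"

definition sqrt_card :: "'a set \<Rightarrow> ereal" where
  "sqrt_card S = (if finite S then ereal (sqrt (real (card S))) else \<infinity>)"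

end

theory Submission
  imports Defs "HOL-Analysis.L2_Norm" "HOL-Library.Real_Mod"
begin

(* Upper bound: every row of a matrix in S(T(S)) has at most |S| entries of modulus at most 1,
   and a Schur multiplier is bounded by the largest l^2 norm of its rows (pair the bilinear form
   column by column with the test operator and use Cauchy-Schwarz).

   Lower bound: choose signs phi on S such that the trigonometric polynomial
   f(t) = sum_s phi(s) e(st/L) has average modulus at least (5/9) |S|^(1/2) over the L-th roots
   of unity (Khintchine's inequality; the constant comes from the second and fourth moments).
   Test the Toeplitz matrix [phi(i-j)] against the contraction F* diag(conj(sgn f)) F on an
   L x L block, F the discrete Fourier transform: the average of the block entries of the Schur
   product is the average of |f|, up to a boundary error sum |s| / L, which is below 1/4 once
   L > 4 sum |s|.

   Infinite S: finite subsets give such witnesses of arbitrary size; placed on disjoint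
   diagonal blocks they glue to one element of S(T(S)) with unbounded multiplier norm. *)

section \<open>Bilinear forms and the matrix norm\<close>

lemma mat_norm_leI:
  assumes "\<And>n x y. (\<Sum>i<n. (cmod (x i))\<^sup>2) \<le> 1 \<Longrightarrow> (\<Sum>i<n. (cmod (y i))\<^sup>2) \<le> 1 \<Longrightarrow>
      cmod (\<Sum>i<n. \<Sum>j<n. cnj (y i) * A i j * x j) \<le> c"
  shows "mat_norm A \<le> ereal c"
  unfolding mat_norm_def by (intro SUP_least) (use assms in auto)

lemma mat_norm_geI:
  assumes "(\<Sum>i<n. (cmod (x i))\<^sup>2) \<le> 1" "(\<Sum>i<n. (cmod (y i))\<^sup>2) \<le> 1"
  shows "ereal (cmod (\<Sum>i<n. \<Sum>j<n. cnj (y i) * A i j * x j)) \<le> mat_norm A"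
  unfolding mat_norm_def
  by (rule SUP_upper2[of n], simp, rule SUP_upper2[of "(x, y)"]) (use assms in auto)

lemma mat_norm_nonneg: "0 \<le> mat_norm A"
  using mat_norm_geI[where n = 0 and A = A] by (simp add: zero_ereal_def)

lemma mat_norm_le_1_column_bound:
  assumes T: "mat_norm T \<le> 1" and j: "j < n"
  shows "cmod (\<Sum>i<n. w i * T i j) \<le> sqrt (\<Sum>i<n. (cmod (w i))\<^sup>2)"
proof (cases "\<forall>i<n. w i = 0")
  case False
  define r where "r = sqrt (\<Sum>i<n. (cmod (w i))\<^sup>2)"
  have r: "r > 0"
    using False by (auto simp: r_def sum_nonneg_eq_0_iff less_le intro!: sum_nonneg)
  define y where "y i = cnj (w i) / of_real r" for i
  define x :: "nat \<Rightarrow> complex" where "x l = (if l = j then 1 else 0)" for l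
  have "(\<Sum>i<n. (cmod (y i))\<^sup>2) = (\<Sum>i<n. (cmod (w i))\<^sup>2) / r\<^sup>2"
    by (simp add: y_def norm_divide power_divide sum_divide_distrib)
  also have "\<dots> = 1"
    using r by (simp add: r_def sum_nonneg)
  finally have y: "(\<Sum>i<n. (cmod (y i))\<^sup>2) \<le> 1"
    by simp
  have x: "(\<Sum>i<n. (cmod (x i))\<^sup>2) \<le> 1"
    using j by (simp add: x_def if_distrib[of "\<lambda>t. (cmod t)\<^sup>2"] cong: if_cong)
  have "(\<Sum>i<n. \<Sum>l<n. cnj (y i) * T i l * x l) = (\<Sum>i<n. w i * T i j) / of_real r"
    using j by (simp add: x_def y_def sum_divide_distrib if_distrib[of "\<lambda>t. _ * t"] cong: if_cong)
  then have "cmod (\<Sum>i<n. w i * T i j) / r \<le> 1"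
    using order.trans[OF mat_norm_geI[OF x y, of T] T] r by (simp add: norm_divide)
  then show ?thesis
    using r by (simp add: r_def field_simps)
qed (simp add: sum_nonneg)

lemma mat_norm_ge_block_average:
  assumes B: "finite B" "B \<noteq> {}"
  shows "ereal (cmod (\<Sum>i\<in>B. \<Sum>j\<in>B. A i j) / card B) \<le> mat_norm A"
proof -
  define n where "n = Suc (Max B)"
  have B_n: "B \<subseteq> {..<n}"
    using B by (auto simp: n_def le_imp_less_Suc)
  define v where "v i = (if i \<in> B then complex_of_real (1 / sqrt (card B)) else 0)" for i
  have card: "real (card B) > 0"
    using B by (simp add: card_gt_0_iff)
  have "(\<Sum>i<n. (cmod (v i))\<^sup>2) = (\<Sum>i\<in>B. 1 / real (card B))"
    using B_n B(1) by (intro sum.mono_neutral_cong_right) (auto simp: v_def power_divide norm_divide)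
  then have v: "(\<Sum>i<n. (cmod (v i))\<^sup>2) \<le> 1"
    using card by simp
  have "(\<Sum>i<n. \<Sum>j<n. cnj (v i) * A i j * v j) = (\<Sum>i\<in>B. \<Sum>j\<in>B. A i j / of_nat (card B))"
    using B_n B(1) card
    by (intro sum.mono_neutral_cong_right) (auto simp: v_def intro!: sum.neutral simp flip: of_real_mult)
  then show ?thesis
    using mat_norm_geI[OF v v, of A] by (simp add: sum_divide_distrib[symmetric] norm_divide)
qed

section \<open>The upper bound\<close>

lemma schur_norm_le_sqrt_row_bound:
  assumes rows: "\<And>i n. (\<Sum>j<n. (cmod (X i j))\<^sup>2) \<le> c"
  shows "schur_norm X \<le> ereal (sqrt c)"
  unfolding schur_norm_def
proof (intro SUP_least mat_norm_leI, clarify)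
  fix T n and x y :: "nat \<Rightarrow> complex"
  assume T: "mat_norm T \<le> 1" and x: "(\<Sum>i<n. (cmod (x i))\<^sup>2) \<le> 1" and y: "(\<Sum>i<n. (cmod (y i))\<^sup>2) \<le> 1"
  define col where "col j = sqrt (\<Sum>i<n. (cmod (y i))\<^sup>2 * (cmod (X i j))\<^sup>2)" for j
  have "(\<Sum>j<n. (col j)\<^sup>2) = (\<Sum>i<n. (cmod (y i))\<^sup>2 * (\<Sum>j<n. (cmod (X i j))\<^sup>2))"
    by (simp add: col_def sum_nonneg sum_distrib_left) (rule sum.swap)
  also have "\<dots> \<le> (\<Sum>i<n. (cmod (y i))\<^sup>2 * c)"
    by (intro sum_mono mult_left_mono rows) simp
  also have "\<dots> \<le> c"
    using mult_right_mono[OF y, of c] rows[of 0 0] by (simp add: sum_distrib_right)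
  finally have col: "L2_set col {..<n} \<le> sqrt c"
    unfolding L2_set_def by simp
  have "(\<Sum>i<n. \<Sum>j<n. cnj (y i) * (X i j * T i j) * x j) = (\<Sum>j<n. x j * (\<Sum>i<n. (cnj (y i) * X i j) * T i j))"
    by (subst sum.swap) (simp add: sum_distrib_left algebra_simps)
  then have "cmod (\<Sum>i<n. \<Sum>j<n. cnj (y i) * (X i j * T i j) * x j)
      \<le> (\<Sum>j<n. cmod (x j) * cmod (\<Sum>i<n. (cnj (y i) * X i j) * T i j))"
    using norm_sum[of "\<lambda>j. x j * (\<Sum>i<n. (cnj (y i) * X i j) * T i j)" "{..<n}"] by (simp add: norm_mult)
  also have "\<dots> \<le> (\<Sum>j<n. cmod (x j) * col j)"
    using mat_norm_le_1_column_bound[OF T, of _ n "\<lambda>i. cnj (y i) * X i _"]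
    by (intro sum_mono mult_left_mono) (auto simp: col_def norm_mult power_mult_distrib)
  also have "\<dots> = (\<Sum>j<n. \<bar>cmod (x j)\<bar> * \<bar>col j\<bar>)"
    by (simp add: col_def sum_nonneg)
  also have "\<dots> \<le> L2_set (\<lambda>j. cmod (x j)) {..<n} * L2_set col {..<n}"
    by (rule L2_set_mult_ineq)
  also have "\<dots> \<le> L2_set col {..<n}"
    using x by (intro mult_left_le_one_le) (auto simp: L2_set_def sum_nonneg)
  finally show "cmod (\<Sum>i<n. \<Sum>j<n. cnj (y i) * (X i j * T i j) * x j) \<le> sqrt c"
    using col by linarith
qed

lemma row_sum_sq_le_card_row:
  assumes "X \<in> schur_class P" "finite {j. (i, j) \<in> P}"
  shows "(\<Sum>j<n. (cmod (X i j))\<^sup>2) \<le> card {j. (i, j) \<in> P}"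
proof -
  have "(\<Sum>j<n. (cmod (X i j))\<^sup>2) \<le> (\<Sum>j<n. if (i, j) \<in> P then 1 else 0)"
    using assms(1) unfolding schur_class_def by (intro sum_mono) (simp add: power_le_one)
  also have "\<dots> = card ({..<n} \<inter> {j. (i, j) \<in> P})"
    by (simp add: sum.If_cases)
  also have "\<dots> \<le> card {j. (i, j) \<in> P}"
    using card_mono[OF assms(2), of "{..<n} \<inter> {j. (i, j) \<in> P}"] by auto
  finally show ?thesis
    by simp
qed

lemma card_toeplitz_row_le:
  assumes "finite S"
  shows "finite {j. (i, j) \<in> toeplitz_pattern S}" "card {j. (i, j) \<in> toeplitz_pattern S} \<le> card S"
proof -
  have inj: "inj_on (\<lambda>j. int i - int j) {j. (i, j) \<in> toeplitz_pattern S}"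
    and into: "(\<lambda>j. int i - int j) ` {j. (i, j) \<in> toeplitz_pattern S} \<subseteq> S"
    by (auto simp: inj_on_def toeplitz_pattern_def)
  show "finite {j. (i, j) \<in> toeplitz_pattern S}"
    by (rule inj_on_finite[OF inj into assms])
  show "card {j. (i, j) \<in> toeplitz_pattern S} \<le> card S"
    by (rule card_inj_on_le[OF inj into assms])
qed

lemma schur_sup_toeplitz_le:
  assumes "finite S"
  shows "schur_sup (toeplitz_pattern S) \<le> sqrt_card S"
proof -
  have "schur_norm X \<le> ereal (sqrt (card S))" if "X \<in> schur_class (toeplitz_pattern S)" for X
  proof (rule schur_norm_le_sqrt_row_bound)
    fix i n
    show "(\<Sum>j<n. (cmod (X i j))\<^sup>2) \<le> real (card S)"
      using row_sum_sq_le_card_row[OF that card_toeplitz_row_le(1)[OF assms, of i], of n]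
        card_toeplitz_row_le(2)[OF assms, of i] by linarith
  qed
  then show ?thesis
    using assms by (simp add: schur_sup_def sqrt_card_def SUP_least)
qed

section \<open>Random signs\<close>

definition signed_sum :: "real list \<Rightarrow> complex list \<Rightarrow> complex" where
  "signed_sum es as = (\<Sum>(e, a)\<leftarrow>zip es as. of_real e * a)"

text \<open>\<^term>\<open>rademacher_sum g as\<close> is \<open>2 ^ length as\<close> times the expectation of \<open>g (\<Sum>i. \<epsilon>\<^sub>i * as ! i)\<close>
  for independent uniformly distributed signs \<open>\<epsilon>\<^sub>i \<in> {1, -1}\<close>.\<close>

definition rademacher_sum :: "(complex \<Rightarrow> real) \<Rightarrow> complex list \<Rightarrow> real" where
  "rademacher_sum g as = (\<Sum>es\<leftarrow>List.n_lists (length as) [1, -1]. g (signed_sum es as))"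

lemma signed_sum_Cons [simp]: "signed_sum (e # es) (a # as) = of_real e * a + signed_sum es as"
  by (simp add: signed_sum_def)

lemma rademacher_sum_Nil [simp]: "rademacher_sum g [] = g 0"
  by (simp add: rademacher_sum_def signed_sum_def)

lemma rademacher_sum_Cons:
  "rademacher_sum g (a # as) = rademacher_sum (\<lambda>z. g (a + z)) as + rademacher_sum (\<lambda>z. g (- a + z)) as"
proof -
  have "(\<Sum>es\<leftarrow>concat (map (\<lambda>ys. [1 # ys, - 1 # ys]) yss). g (signed_sum es (a # as)))
      = (\<Sum>es\<leftarrow>yss. g (a + signed_sum es as)) + (\<Sum>es\<leftarrow>yss. g (- a + signed_sum es as))" for yss
    by (induction yss) simp_all
  then show ?thesis by (simp add: rademacher_sum_def)
qed

lemma rademacher_sum_add: "rademacher_sum (\<lambda>z. f z + g z) as = rademacher_sum f as + rademacher_sum g as"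
  by (simp add: rademacher_sum_def sum_list_addf)

lemma rademacher_sum_cmult: "rademacher_sum (\<lambda>z. c * f z) as = c * rademacher_sum f as"
  by (simp add: rademacher_sum_def sum_list_const_mult)

lemma rademacher_sum_const: "rademacher_sum (\<lambda>z. c) as = c * 2 ^ length as"
  by (simp add: rademacher_sum_def sum_list_triv length_n_lists)

lemma rademacher_sum_mono: "(\<And>z. f z \<le> g z) \<Longrightarrow> rademacher_sum f as \<le> rademacher_sum g as"
  unfolding rademacher_sum_def by (rule sum_list_mono)

lemma parallelogram_law_cmod: "cmod (a + z) ^ 2 + cmod (- a + z) ^ 2 = 2 * cmod z ^ 2 + 2 * cmod a ^ 2"
  unfolding cmod_power2 by (simp add: power2_eq_square algebra_simps)

lemma fourth_power_parallelogram_le: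
  assumes "cmod a = 1"
  shows "cmod (a + z) ^ 4 + cmod (- a + z) ^ 4 \<le> 2 * cmod z ^ 4 + 12 * cmod z ^ 2 + 2"
proof -
  define r where "r = Re a * Re z + Im a * Im z"
  have a: "Re a ^ 2 + Im a ^ 2 = 1"
    using assms by (metis cmod_power2 one_power2)
  have plus: "cmod (a + z) ^ 2 = cmod z ^ 2 + 1 + 2 * r"
    and minus: "cmod (- a + z) ^ 2 = cmod z ^ 2 + 1 - 2 * r"
    using a unfolding cmod_power2 r_def by (simp_all add: power2_eq_square algebra_simps)
  have "r ^ 2 + (Re a * Im z - Im a * Re z) ^ 2 = (Re a ^ 2 + Im a ^ 2) * cmod z ^ 2"
    unfolding r_def cmod_power2 by (simp add: power2_eq_square algebra_simps)
  then have "r ^ 2 \<le> cmod z ^ 2"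
    unfolding a by (metis mult_1 le_add_same_cancel1 zero_le_power2)
  moreover have fourth: "w ^ 4 = (w ^ 2) ^ 2" for w :: real
    by (simp flip: power_mult)
  ultimately show ?thesis
    unfolding fourth plus minus by (simp add: power2_eq_square algebra_simps)
qed

lemma rademacher_second_moment:
  "\<forall>a\<in>set as. cmod a = 1 \<Longrightarrow> rademacher_sum (\<lambda>z. cmod z ^ 2) as = 2 ^ length as * length as"
proof (induction as)
  case (Cons a as)
  have "rademacher_sum (\<lambda>z. cmod z ^ 2) (a # as) = rademacher_sum (\<lambda>z. 2 * cmod z ^ 2 + 2) as"
    unfolding rademacher_sum_Cons rademacher_sum_add[symmetric] parallelogram_law_cmod
    using Cons.prems by simp
  also have "\<dots> = 2 * rademacher_sum (\<lambda>z. cmod z ^ 2) as + 2 * 2 ^ length as"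
    by (simp add: rademacher_sum_add rademacher_sum_cmult rademacher_sum_const)
  finally show ?case
    using Cons by simp
qed simp

lemma rademacher_fourth_moment_le:
  "\<forall>a\<in>set as. cmod a = 1 \<Longrightarrow> rademacher_sum (\<lambda>z. cmod z ^ 4) as \<le> 2 ^ length as * (3 * length as ^ 2)"
proof (induction as)
  case (Cons a as)
  have "rademacher_sum (\<lambda>z. cmod z ^ 4) (a # as)
      \<le> rademacher_sum (\<lambda>z. 2 * cmod z ^ 4 + 12 * cmod z ^ 2 + 2) as"
    unfolding rademacher_sum_Cons rademacher_sum_add[symmetric]
    using fourth_power_parallelogram_le Cons.prems by (intro rademacher_sum_mono) auto
  also have "\<dots> = 2 * rademacher_sum (\<lambda>z. cmod z ^ 4) as + 12 * rademacher_sum (\<lambda>z. cmod z ^ 2) as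
      + 2 * 2 ^ length as"
    by (simp add: rademacher_sum_add rademacher_sum_cmult rademacher_sum_const)
  also have "\<dots> \<le> 2 * (2 ^ length as * (3 * length as ^ 2)) + 12 * (2 ^ length as * length as)
      + 2 * 2 ^ length as"
    using Cons rademacher_second_moment[of as] by simp
  also have "\<dots> \<le> 2 ^ length (a # as) * (3 * length (a # as) ^ 2)"
    by (simp add: power2_eq_square algebra_simps)
  finally show ?case .
qed simp

lemma quartic_minorant_le_self:
  fixes x t :: real
  assumes "x \<ge> 0" "t > 0"
  shows "x ^ 2 / t - 4 / 27 * x ^ 4 / t ^ 3 \<le> x"
proof -
  have "27 * (x * t ^ 3 - (x ^ 2 * t ^ 2 - 4 / 27 * x ^ 4)) = x * (2 * x - 3 * t) ^ 2 * (x + 3 * t)"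
    by (simp add: power2_eq_square power3_eq_cube power4_eq_xxxx algebra_simps)
  moreover have "x * (2 * x - 3 * t) ^ 2 * (x + 3 * t) \<ge> 0"
    using assms by simp
  ultimately have "x ^ 2 * t ^ 2 - 4 / 27 * x ^ 4 \<le> x * t ^ 3"
    by (smt (verit))
  then show ?thesis
    using assms by (simp add: field_simps power_eq_if)
qed

text \<open>Khintchine's lower bound: average the minorant \<open>x\<^sup>2 / t - 4 x\<^sup>4 / (27 t\<^sup>3) \<le> x\<close> at
  \<open>t = sqrt (length as)\<close>, using the second and fourth moments.\<close>

lemma rademacher_first_moment_ge:
  assumes "\<forall>a\<in>set as. cmod a = 1" "as \<noteq> []"
  shows "2 ^ length as * (5 / 9 * sqrt (length as)) \<le> rademacher_sum cmod as"
proof -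
  define n where "n = length as"
  define t where "t = sqrt n"
  have t: "t > 0" and tt: "t ^ 2 = n"
    using assms(2) by (simp_all add: n_def t_def)
  have "rademacher_sum (\<lambda>z. (1 / t) * cmod z ^ 2 + (- (4 / 27) / t ^ 3) * cmod z ^ 4) as
      \<le> rademacher_sum cmod as"
    using quartic_minorant_le_self[OF _ t] by (intro rademacher_sum_mono) auto
  moreover have "rademacher_sum (\<lambda>z. (1 / t) * cmod z ^ 2 + (- (4 / 27) / t ^ 3) * cmod z ^ 4) as
      = (1 / t) * (2 ^ n * n) + (- (4 / 27) / t ^ 3) * rademacher_sum (\<lambda>z. cmod z ^ 4) as"
    unfolding rademacher_sum_add rademacher_sum_cmult rademacher_second_moment[OF assms(1)] n_def
    by simp
  moreover have "(- (4 / 27) / t ^ 3) * (2 ^ n * (3 * n ^ 2))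
      \<le> (- (4 / 27) / t ^ 3) * rademacher_sum (\<lambda>z. cmod z ^ 4) as"
    using rademacher_fourth_moment_le[OF assms(1)] t by (intro mult_left_mono_neg) (auto simp: n_def)
  moreover have "(1 / t) * (2 ^ n * n) + (- (4 / 27) / t ^ 3) * (2 ^ n * (3 * n ^ 2)) = 2 ^ n * (5 / 9 * t)"
    using t by (simp add: of_nat_power flip: tt)
      (simp add: field_simps power2_eq_square power3_eq_cube power4_eq_xxxx)
  ultimately show ?thesis
    unfolding n_def t_def by linarith
qed

lemma signed_sum_map:
  assumes "distinct sl" "length es = length sl"
  shows "signed_sum es (map h sl)
    = (\<Sum>s\<in>set sl. (case map_of (zip sl es) s of Some e \<Rightarrow> of_real e | None \<Rightarrow> 0) * h s)"
  using assms
proof (induction sl arbitrary: es)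
  case (Cons s sl)
  then obtain e es' where es: "es = e # es'" and "length es' = length sl"
    by (cases es) auto
  have "signed_sum es (map h (s # sl)) = of_real e * h s + signed_sum es' (map h sl)"
    by (simp add: es)
  also have "signed_sum es' (map h sl)
      = (\<Sum>t\<in>set sl. (case map_of (zip (s # sl) es) t of Some e \<Rightarrow> of_real e | None \<Rightarrow> 0) * h t)"
    using Cons by (auto simp: es intro!: sum.cong)
  finally show ?case
    using Cons.prems by (simp add: es)
qed (simp add: signed_sum_def)

lemma sum_list_ge_imp_ex_ge:
  fixes f :: "'a \<Rightarrow> real"
  assumes "xs \<noteq> []" "(\<Sum>x\<leftarrow>xs. c) \<le> (\<Sum>x\<leftarrow>xs. f x)"
  shows "\<exists>x \<in> set xs. c \<le> f x"
  using sum_list_strict_mono[OF assms(1), of f "\<lambda>_. c"] assms(2) by (meson leD leI)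

lemma exists_signs_sum_norm_ge:
  assumes "n > 0" and lengths: "\<And>k. k \<in> K \<Longrightarrow> length (as k) = n"
    and unimodular: "\<And>k. k \<in> K \<Longrightarrow> \<forall>a\<in>set (as k). cmod a = 1"
  shows "\<exists>es. length es = n \<and> set es \<subseteq> {1, -1} \<and>
    real (card K) * (5 / 9 * sqrt n) \<le> (\<Sum>k\<in>K. cmod (signed_sum es (as k)))"
proof -
  define signs where "signs = List.n_lists n [1, -1 :: real]"
  define c where "c = real (card K) * (5 / 9 * sqrt n)"
  have swap: "(\<Sum>es\<leftarrow>xs. \<Sum>k\<in>K. f k es) = (\<Sum>k\<in>K. \<Sum>es\<leftarrow>xs. f k es)"
    for xs and f :: "'a \<Rightarrow> real list \<Rightarrow> real"
    by (induction xs) (simp_all add: sum.distrib)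
  have "(\<Sum>es\<leftarrow>signs. c) = (\<Sum>k\<in>K. 2 ^ n * (5 / 9 * sqrt n))"
    by (simp add: c_def signs_def sum_list_triv length_n_lists)
  also have "\<dots> \<le> (\<Sum>k\<in>K. rademacher_sum cmod (as k))"
    using rademacher_first_moment_ge lengths unimodular \<open>n > 0\<close> by (intro sum_mono) fastforce
  also have "\<dots> = (\<Sum>es\<leftarrow>signs. \<Sum>k\<in>K. cmod (signed_sum es (as k)))"
    by (simp add: signs_def rademacher_sum_def swap lengths cong: sum.cong)
  finally have "(\<Sum>es\<leftarrow>signs. c) \<le> (\<Sum>es\<leftarrow>signs. \<Sum>k\<in>K. cmod (signed_sum es (as k)))" .
  moreover have "signs \<noteq> []"
    unfolding length_greater_0_conv[symmetric] signs_def length_n_lists by simp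
  ultimately obtain es where "es \<in> set signs" "c \<le> (\<Sum>k\<in>K. cmod (signed_sum es (as k)))"
    using sum_list_ge_imp_ex_ge by blast
  then show ?thesis
    by (auto simp: signs_def set_n_lists c_def)
qed

lemma exists_bounded_coeffs_sum_norm_ge:
  fixes a :: "'k \<Rightarrow> 'a \<Rightarrow> complex"
  assumes S: "finite S" "S \<noteq> {}" and unimodular: "\<And>k s. k \<in> K \<Longrightarrow> s \<in> S \<Longrightarrow> cmod (a k s) = 1"
  shows "\<exists>\<phi>. (\<forall>s. cmod (\<phi> s) \<le> 1) \<and>
    real (card K) * (5 / 9 * sqrt (card S)) \<le> (\<Sum>k\<in>K. cmod (\<Sum>s\<in>S. \<phi> s * a k s))"
proof -
  obtain sl where sl: "set sl = S" "distinct sl"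
    using finite_distinct_list[OF S(1)] by blast
  then have "length sl = card S" "length sl > 0"
    using S by (auto simp: distinct_card)
  then obtain es where es: "length es = length sl" "set es \<subseteq> {1, -1}"
    "real (card K) * (5 / 9 * sqrt (card S)) \<le> (\<Sum>k\<in>K. cmod (signed_sum es (map (a k) sl)))"
    using exists_signs_sum_norm_ge[of "length sl" K "\<lambda>k. map (a k) sl"] unimodular sl(1) by auto
  define \<phi> where "\<phi> s = (case map_of (zip sl es) s of Some e \<Rightarrow> complex_of_real e | None \<Rightarrow> 0)" for s
  have "cmod (\<phi> s) \<le> 1" for s
    using es(2) by (auto simp: \<phi>_def split: option.splits dest!: map_of_SomeD set_zip_rightD)
  moreover have "signed_sum es (map (a k) sl) = (\<Sum>s\<in>S. \<phi> s * a k s)" for k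
    using signed_sum_map[OF sl(2) es(1)] by (simp add: \<phi>_def sl(1))
  ultimately show ?thesis
    using es(3) by auto
qed

section \<open>Discrete Fourier analysis on a block\<close>

definition fourier_char :: "nat \<Rightarrow> real \<Rightarrow> complex" where
  "fourier_char L x = cis (2 * pi * x / real L)"

lemma fourier_char_mult: "fourier_char L a * fourier_char L b = fourier_char L (a + b)"
  by (simp add: fourier_char_def cis_mult add_divide_distrib distrib_left)

lemma cnj_fourier_char: "cnj (fourier_char L a) = fourier_char L (- a)"
  by (simp add: fourier_char_def cis_cnj)

lemma norm_fourier_char [simp]: "cmod (fourier_char L a) = 1"
  by (simp add: fourier_char_def)

lemma sum_fourier_char_orthogonal:
  assumes L: "L \<ge> 1" and d: "\<bar>d\<bar> < int L"
  shows "(\<Sum>k<L. fourier_char L (real k * of_int d)) = (if d = 0 then of_nat L else 0)"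
proof (cases "d = 0")
  case False
  define r where "r = fourier_char L (of_int d)"
  have powers: "fourier_char L (real k * of_int d) = r ^ k" for k
    unfolding r_def fourier_char_def DeMoivre by (simp add: algebra_simps)
  have "r ^ L = 1"
    using L unfolding r_def fourier_char_def DeMoivre by simp
  moreover have "r \<noteq> 1"
  proof
    assume "r = 1"
    then obtain q where "2 * pi * of_int d / real L = of_int q * (2 * pi)"
      unfolding r_def fourier_char_def cis_eq_1_iff by blast
    then have "d = q * int L"
      using L by (simp add: field_simps) (metis of_int_eq_iff of_int_mult of_int_of_nat_eq)
    with d False show False
      by (cases "q = 0") (auto simp: abs_mult dest: mult_le_cancel_right2[THEN iffD2, of 1 "\<bar>q\<bar>"])
  qed
  ultimately show ?thesis
    using False by (simp add: powers geometric_sum)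
qed (simp add: fourier_char_def)

definition dft :: "nat \<Rightarrow> nat set \<Rightarrow> (nat \<Rightarrow> complex) \<Rightarrow> nat \<Rightarrow> complex" where
  "dft L I x k = (\<Sum>j\<in>I. x j * fourier_char L (- (real k * real j)))"

lemma dft_parseval:
  assumes L: "L \<ge> 1" and I: "I \<subseteq> {b0..<b0 + L}"
  shows "(\<Sum>k<L. (cmod (dft L I x k))\<^sup>2) = real L * (\<Sum>j\<in>I. (cmod (x j))\<^sup>2)"
proof -
  have fin: "finite I"
    using I finite_subset by blast
  have "complex_of_real (\<Sum>k<L. (cmod (dft L I x k))\<^sup>2) = (\<Sum>k<L. dft L I x k * cnj (dft L I x k))"
    by (simp only: of_real_sum complex_norm_square)
  also have "\<dots> = (\<Sum>k<L. \<Sum>j\<in>I. \<Sum>j'\<in>I. x j * cnj (x j') * fourier_char L (real k * of_int (int j' - int j)))"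
    by (simp add: dft_def sum_distrib_left sum_distrib_right cnj_fourier_char fourier_char_mult algebra_simps)
      (rule sum.cong[OF refl], rule sum.swap)
  also have "\<dots> = (\<Sum>j\<in>I. \<Sum>j'\<in>I. x j * cnj (x j') * (\<Sum>k<L. fourier_char L (real k * of_int (int j' - int j))))"
    by (simp add: sum_distrib_left sum.swap[of _ "{..<L}"] sum.swap[of _ "{..<L}" I])
  also have "\<dots> = (\<Sum>j\<in>I. \<Sum>j'\<in>I. x j * cnj (x j') * (if j' = j then of_nat L else 0))"
  proof (intro sum.cong refl)
    fix j j' assume "j \<in> I" "j' \<in> I"
    then have "j \<in> {b0..<b0 + L}" "j' \<in> {b0..<b0 + L}"
      using I by auto
    then have "\<bar>int j' - int j\<bar> < int L"
      by auto
    then show "x j * cnj (x j') * (\<Sum>k<L. fourier_char L (real k * of_int (int j' - int j))) =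
        x j * cnj (x j') * (if j' = j then of_nat L else 0)"
      using sum_fourier_char_orthogonal[OF L] by (simp del: of_int_diff)
  qed
  also have "\<dots> = (\<Sum>j\<in>I. of_nat L * (x j * cnj (x j)))"
    using fin by (simp add: if_distrib[of "\<lambda>t. _ * t"] sum.delta mult.commute cong: if_cong)
  also have "\<dots> = complex_of_real (real L * (\<Sum>j\<in>I. (cmod (x j))\<^sup>2))"
    by (simp add: sum_distrib_left flip: complex_norm_square)
  finally show ?thesis
    using of_real_eq_iff by blast
qed

text \<open>The matrix \<open>F\<^sup>* diag u F / L\<close> of the \<open>L\<close>-point discrete Fourier transform \<open>F\<close>, placed on the
  diagonal block \<open>{b0..<b0 + L}\<close>; since \<open>F / sqrt L\<close> is unitary it is a contraction when \<open>\<bar>u\<bar> \<le> 1\<close>.\<close>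

definition fourier_block :: "nat \<Rightarrow> nat \<Rightarrow> (nat \<Rightarrow> complex) \<Rightarrow> nat \<Rightarrow> nat \<Rightarrow> complex" where
  "fourier_block L b0 u i j = (if i \<in> {b0..<b0 + L} \<and> j \<in> {b0..<b0 + L}
     then (\<Sum>k<L. u k * fourier_char L (real k * (real i - real j))) / of_nat L else 0)"

lemma fourier_block_bilinear:
  fixes n b0 L :: nat
  defines "I \<equiv> {..<n} \<inter> {b0..<b0 + L}"
  shows "(\<Sum>i<n. \<Sum>j<n. cnj (y i) * fourier_block L b0 u i j * x j)
    = (\<Sum>k<L. u k * cnj (dft L I y k) * dft L I x k) / of_nat L"
proof -
  have "(\<Sum>i<n. \<Sum>j<n. cnj (y i) * fourier_block L b0 u i j * x j)
      = (\<Sum>i\<in>I. \<Sum>j\<in>I. cnj (y i) * fourier_block L b0 u i j * x j)"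
    by (intro sum.mono_neutral_cong_right) (auto simp: I_def fourier_block_def intro!: sum.neutral split: if_splits)
  also have "\<dots> = (\<Sum>i\<in>I. \<Sum>j\<in>I. \<Sum>k<L. u k * cnj (y i) * fourier_char L (real k * real i)
          * x j * fourier_char L (- (real k * real j)) / of_nat L)"
    by (intro sum.cong refl) (auto simp: I_def fourier_block_def sum_divide_distrib sum_distrib_left
        sum_distrib_right fourier_char_mult algebra_simps)
  also have "\<dots> = (\<Sum>k<L. u k * cnj (dft L I y k) * dft L I x k) / of_nat L"
    by (simp add: dft_def cnj_fourier_char sum_divide_distrib sum_distrib_left sum_distrib_right
        sum.swap[of _ I "{..<L}"] sum.swap[of _ _ "{..<L}"] algebra_simps)
  finally show ?thesis .
qed

lemma mat_norm_fourier_block_le_1: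
  assumes L: "L \<ge> 1" and u: "\<And>k. cmod (u k) \<le> 1"
  shows "mat_norm (fourier_block L b0 u) \<le> 1"
proof -
  have "mat_norm (fourier_block L b0 u) \<le> ereal 1"
  proof (rule mat_norm_leI)
    fix n and x y :: "nat \<Rightarrow> complex"
    assume x: "(\<Sum>i<n. (cmod (x i))\<^sup>2) \<le> 1" and y: "(\<Sum>i<n. (cmod (y i))\<^sup>2) \<le> 1"
    define I where "I = {..<n} \<inter> {b0..<b0 + L}"
    have dft_le: "L2_set (\<lambda>k. cmod (dft L I z k)) {..<L} \<le> sqrt L" if z: "(\<Sum>i<n. (cmod (z i))\<^sup>2) \<le> 1" for z
    proof -
      have "(\<Sum>j\<in>I. (cmod (z j))\<^sup>2) \<le> 1"
        using sum_mono2[of "{..<n}" I "\<lambda>j. (cmod (z j))\<^sup>2"] z by (auto simp: I_def)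
      then show ?thesis
        using dft_parseval[OF L, of I b0 z] mult_left_mono[of _ 1 "real L"]
        by (simp add: L2_set_def I_def)
    qed
    have "cmod (\<Sum>i<n. \<Sum>j<n. cnj (y i) * fourier_block L b0 u i j * x j)
        = cmod (\<Sum>k<L. u k * cnj (dft L I y k) * dft L I x k) / real L"
      by (simp add: fourier_block_bilinear I_def norm_divide)
    also have "\<dots> \<le> (\<Sum>k<L. \<bar>cmod (dft L I y k)\<bar> * \<bar>cmod (dft L I x k)\<bar>) / real L"
      using u by (intro divide_right_mono order_trans[OF norm_sum] sum_mono)
        (auto simp: norm_mult mult_left_le_one_le mult.assoc)
    also have "\<dots> \<le> L2_set (\<lambda>k. cmod (dft L I y k)) {..<L} * L2_set (\<lambda>k. cmod (dft L I x k)) {..<L} / real L"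
      by (intro divide_right_mono L2_set_mult_ineq) simp
    also have "\<dots> \<le> sqrt L * sqrt L / real L"
      by (intro divide_right_mono mult_mono dft_le x y) (auto simp: L2_set_nonneg)
    also have "\<dots> = 1"
      using L by simp
    finally show "cmod (\<Sum>i<n. \<Sum>j<n. cnj (y i) * fourier_block L b0 u i j * x j) \<le> 1" .
  qed
  then show ?thesis
    by (simp add: one_ereal_def)
qed

section \<open>Witnesses for large multiplier norms\<close>

definition schur_witness ::
    "(nat \<times> nat) set \<Rightarrow> real \<Rightarrow> nat set \<Rightarrow> (nat \<Rightarrow> nat \<Rightarrow> complex) \<Rightarrow> (nat \<Rightarrow> nat \<Rightarrow> complex) \<Rightarrow> bool"
  where "schur_witness P c R X T \<longleftrightarrow> X \<in> schur_class P \<and> mat_norm T \<le> 1 \<and>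
    (\<forall>i j. i \<notin> R \<longrightarrow> T i j = 0) \<and> ereal c \<le> mat_norm (\<lambda>i j. X i j * T i j)"

lemma schur_witness_le_schur_norm:
  assumes "schur_witness P c R X T"
  shows "ereal c \<le> schur_norm X"
proof -
  have "ereal c \<le> mat_norm (\<lambda>i j. X i j * T i j)"
    using assms by (simp add: schur_witness_def)
  also have "\<dots> \<le> schur_norm X"
    unfolding schur_norm_def using assms by (intro SUP_upper) (simp add: schur_witness_def)
  finally show ?thesis .
qed

lemma schur_witness_le_schur_sup:
  assumes "schur_witness P c R X T"
  shows "ereal c \<le> schur_sup P"
proof -
  have "X \<in> schur_class P"
    using assms by (simp add: schur_witness_def)
  then show ?thesis
    unfolding schur_sup_def using schur_witness_le_schur_norm[OF assms] by (blast intro: SUP_upper2)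
qed

lemma schur_witness_mono:
  assumes "P \<subseteq> Q" "c \<le> c'" "schur_witness P c' R X T"
  shows "schur_witness Q c R X T"
  using assms order_trans[of "ereal c" "ereal c'"] unfolding schur_witness_def schur_class_def by auto

lemma schur_witness_zero: "schur_witness P 0 R (\<lambda>i j. 0) (\<lambda>i j. 0)"
proof -
  have "mat_norm (\<lambda>i j. 0) \<le> ereal 1"
    by (rule mat_norm_leI) simp
  then show ?thesis
    using mat_norm_nonneg[of "\<lambda>i j. 0"]
    by (simp add: schur_witness_def schur_class_def zero_ereal_def one_ereal_def)
qed

lemma Least_less_partial_sum_eq:
  fixes len :: "nat \<Rightarrow> nat"
  assumes "(\<Sum>l<k. len l) \<le> i" "i < (\<Sum>l<Suc k. len l)"
  shows "(LEAST k'. i < (\<Sum>l<Suc k'. len l)) = k"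
proof (rule Least_equality)
  show "k \<le> k'" if "i < (\<Sum>l<Suc k'. len l)" for k'
  proof (rule ccontr)
    assume "\<not> k \<le> k'"
    then have "(\<Sum>l<Suc k'. len l) \<le> (\<Sum>l<k. len l)"
      by (intro sum_mono2) auto
    with assms(1) that show False
      by simp
  qed
qed (rule assms(2))

lemma schur_norm_infinite_if_block_witnesses:
  assumes "\<And>c. \<exists>L. \<forall>b0. \<exists>X T. schur_witness P c {b0..<b0 + L} X T"
  shows "\<exists>X \<in> schur_class P. schur_norm X = \<infinity>"
proof -
  have "\<forall>k. \<exists>L. \<forall>b0. \<exists>X T. schur_witness P (real k) {b0..<b0 + L} X T"
    using assms by blast
  then obtain len where len: "\<forall>b0. \<exists>X T. schur_witness P (real k) {b0..<b0 + len k} X T" for k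
    by metis
  define off where "off k = (\<Sum>l<k. len l)" for k
  have "\<forall>k. \<exists>X T. schur_witness P (real k) {off k..<off k + len k} X T"
    using len by blast
  then obtain Xs Ts where witness: "schur_witness P (real k) {off k..<off k + len k} (Xs k) (Ts k)" for k
    by metis
  define block where "block i = (LEAST k. i < off (Suc k))" for i
  have block: "block i = k" if "i \<in> {off k..<off k + len k}" for i k
    using that Least_less_partial_sum_eq[of len k i] by (simp add: block_def off_def)
  define X where "X i j = Xs (block i) i j" for i j
  have "X \<in> schur_class P"
    using witness by (simp add: X_def schur_class_def schur_witness_def)
  moreover have "schur_witness P (real k) {off k..<off k + len k} X (Ts k)" for k
  proof -
    have "X i j * Ts k i j = Xs k i j * Ts k i j" for i j
      using witness[of k] block[of i k] by (cases "i \<in> {off k..<off k + len k}") (auto simp: X_def schur_witness_def)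
    then have "(\<lambda>i j. X i j * Ts k i j) = (\<lambda>i j. Xs k i j * Ts k i j)"
      by blast
    with witness[of k] \<open>X \<in> schur_class P\<close> show ?thesis
      by (simp add: schur_witness_def)
  qed
  then have "ereal (real k) \<le> schur_norm X" for k
    by (rule schur_witness_le_schur_norm)
  then have "schur_norm X = \<infinity>"
  proof (intro ereal_top)
    fix B
    obtain k where "B \<le> real k"
      using real_arch_simple by blast
    then show "ereal B \<le> schur_norm X"
      using \<open>ereal (real k) \<le> schur_norm X\<close> order_trans ereal_less_eq(3) by blast
  qed
  ultimately show ?thesis
    by blast
qed

section \<open>Toeplitz patterns\<close>

lemma sum_diagonal_reindex:
  assumes "finite S"
  shows "(\<Sum>j\<in>{b0..<b0 + L}. if int i - int j \<in> S then g (int i - int j) else 0)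
    = (\<Sum>s\<in>S. if int i - s \<in> {int b0..<int b0 + int L} then g s else 0)"
proof -
  have "(\<Sum>j\<in>{b0..<b0 + L}. if int i - int j \<in> S then g (int i - int j) else 0)
      = (\<Sum>j\<in>{j\<in>{b0..<b0 + L}. int i - int j \<in> S}. g (int i - int j))"
    by (rule sum.inter_filter[symmetric]) simp
  also have "\<dots> = (\<Sum>s\<in>{s\<in>S. int i - s \<in> {int b0..<int b0 + int L}}. g s)"
    by (rule sum.reindex_bij_witness[where i = "\<lambda>s. nat (int i - s)" and j = "\<lambda>j. int i - int j"]) auto
  also have "\<dots> = (\<Sum>s\<in>S. if int i - s \<in> {int b0..<int b0 + int L} then g s else 0)"
    using assms by (simp add: sum.inter_filter)
  finally show ?thesis .
qed

lemma card_shift_out_of_interval_le: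
  "card {i\<in>{b0..<b0 + L}. int i - s \<notin> {int b0..<int b0 + int L}} \<le> nat \<bar>s\<bar>"
proof -
  have "{i\<in>{b0..<b0 + L}. int i - s \<notin> {int b0..<int b0 + int L}}
      \<subseteq> {b0..<b0 + nat s} \<union> {b0 + L - nat (- s)..<b0 + L}"
    by auto
  then have "card {i\<in>{b0..<b0 + L}. int i - s \<notin> {int b0..<int b0 + int L}}
      \<le> card {b0..<b0 + nat s} + card {b0 + L - nat (- s)..<b0 + L}"
    by (meson card_Un_le card_mono finite_Un finite_atLeastLessThan order_trans)
  also have "\<dots> \<le> nat \<bar>s\<bar>"
    by auto
  finally show ?thesis .
qed

lemma toeplitz_block_sum_approx:
  fixes g :: "int \<Rightarrow> complex"
  assumes S: "finite S"
  shows "cmod (of_nat L * (\<Sum>s\<in>S. g s)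
      - (\<Sum>i\<in>{b0..<b0 + L}. \<Sum>j\<in>{b0..<b0 + L}. if int i - int j \<in> S then g (int i - int j) else 0))
    \<le> (\<Sum>s\<in>S. cmod (g s) * \<bar>real_of_int s\<bar>)"
proof -
  define B where "B = {b0..<b0 + L}"
  define out where "out s = {i\<in>B. int i - s \<notin> {int b0..<int b0 + int L}}" for s
  have "(\<Sum>i\<in>B. \<Sum>j\<in>B. if int i - int j \<in> S then g (int i - int j) else 0)
      = (\<Sum>s\<in>S. \<Sum>i\<in>B. if int i - s \<in> {int b0..<int b0 + int L} then g s else 0)"
    unfolding B_def sum_diagonal_reindex[OF S] by (rule sum.swap)
  also have "\<dots> = (\<Sum>s\<in>S. g s * of_nat L - g s * of_nat (card (out s)))"
  proof (rule sum.cong[OF refl])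
    fix s
    have "(\<Sum>i\<in>B. if int i - s \<in> {int b0..<int b0 + int L} then g s else 0)
        = (\<Sum>i\<in>B. g s - (if int i - s \<notin> {int b0..<int b0 + int L} then g s else 0))"
      by (intro sum.cong) auto
    also have "\<dots> = (\<Sum>i\<in>B. g s) - (\<Sum>i\<in>out s. g s)"
      unfolding sum_subtractf out_def by (subst sum.inter_filter) (simp_all add: B_def)
    finally show "(\<Sum>i\<in>B. if int i - s \<in> {int b0..<int b0 + int L} then g s else 0)
        = g s * of_nat L - g s * of_nat (card (out s))"
      by (simp add: B_def mult.commute)
  qed
  finally have "of_nat L * (\<Sum>s\<in>S. g s) - (\<Sum>i\<in>B. \<Sum>j\<in>B. if int i - int j \<in> S then g (int i - int j) else 0)
      = (\<Sum>s\<in>S. g s * of_nat (card (out s)))"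
    by (simp add: sum_subtractf sum_distrib_left mult.commute)
  also have "cmod \<dots> \<le> (\<Sum>s\<in>S. cmod (g s) * \<bar>real_of_int s\<bar>)"
  proof (rule order_trans[OF norm_sum sum_mono])
    fix s
    have "real (card (out s)) \<le> \<bar>real_of_int s\<bar>"
      using card_shift_out_of_interval_le[of b0 L s] unfolding out_def B_def
      by (metis (no_types, lifting) of_int_abs of_nat_mono of_nat_nat abs_ge_zero order_trans order_refl)
    then show "cmod (g s * of_nat (card (out s))) \<le> cmod (g s) * \<bar>real_of_int s\<bar>"
      by (simp add: norm_mult mult_left_mono)
  qed
  finally show ?thesis
    unfolding B_def .
qed

definition toeplitz_matrix :: "(int \<Rightarrow> complex) \<Rightarrow> int set \<Rightarrow> nat \<Rightarrow> nat \<Rightarrow> complex" where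
  "toeplitz_matrix \<phi> S i j = (if int i - int j \<in> S then \<phi> (int i - int j) else 0)"

lemma toeplitz_matrix_in_schur_class:
  "(\<And>s. cmod (\<phi> s) \<le> 1) \<Longrightarrow> toeplitz_matrix \<phi> S \<in> schur_class (toeplitz_pattern S)"
  by (simp add: schur_class_def toeplitz_matrix_def toeplitz_pattern_def)

lemma toeplitz_fourier_block_sum:
  "(\<Sum>i\<in>{b0..<b0 + L}. \<Sum>j\<in>{b0..<b0 + L}. toeplitz_matrix \<phi> S i j * fourier_block L b0 u i j)
    = (\<Sum>k<L. u k * (\<Sum>i\<in>{b0..<b0 + L}. \<Sum>j\<in>{b0..<b0 + L}. if int i - int j \<in> S
        then \<phi> (int i - int j) * fourier_char L (real k * of_int (int i - int j)) else 0)) / of_nat L"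
  by (simp add: toeplitz_matrix_def fourier_block_def sum_divide_distrib sum_distrib_left sum_distrib_right
      sum.swap[of _ "{b0..<b0 + L}" "{..<L}"] sum.swap[of _ _ "{..<L}"] if_distrib[of "\<lambda>t. _ * t"]
      if_distrib[of "\<lambda>t. t * _"] algebra_simps cong: if_cong)

lemma mult_cnj_sgn: "z * cnj (sgn z) = of_real (cmod z)"
proof -
  have "z * cnj z = of_real (cmod z) * of_real (cmod z)"
    by (simp add: power2_eq_square flip: complex_norm_square)
  then show ?thesis
    by (cases "z = 0") (simp_all add: sgn_eq)
qed

lemma toeplitz_fourier_block_sum_ge:
  fixes \<phi> :: "int \<Rightarrow> complex"
  assumes S: "finite S" and \<phi>: "\<And>s. cmod (\<phi> s) \<le> 1" and L: "L \<ge> 1"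
  defines "f \<equiv> \<lambda>k. \<Sum>s\<in>S. \<phi> s * fourier_char L (real k * of_int s)"
  shows "(\<Sum>k<L. cmod (f k)) - (\<Sum>s\<in>S. \<bar>real_of_int s\<bar>)
    \<le> cmod (\<Sum>i\<in>{b0..<b0 + L}. \<Sum>j\<in>{b0..<b0 + L}.
        toeplitz_matrix \<phi> S i j * fourier_block L b0 (\<lambda>k. cnj (sgn (f k))) i j)"
proof -
  define W where "W = (\<Sum>s\<in>S. \<bar>real_of_int s\<bar>)"
  define u where "u k = cnj (sgn (f k))" for k
  define D where "D k = (\<Sum>i\<in>{b0..<b0 + L}. \<Sum>j\<in>{b0..<b0 + L}. if int i - int j \<in> S
      then \<phi> (int i - int j) * fourier_char L (real k * of_int (int i - int j)) else 0)" for k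
  have D: "cmod (of_nat L * f k - D k) \<le> W" for k
  proof -
    have "cmod (of_nat L * f k - D k) \<le> (\<Sum>s\<in>S. cmod (\<phi> s * fourier_char L (real k * of_int s)) * \<bar>real_of_int s\<bar>)"
      using toeplitz_block_sum_approx[OF S, of L "\<lambda>s. \<phi> s * fourier_char L (real k * of_int s)" b0]
      unfolding f_def D_def .
    also have "\<dots> \<le> W"
      unfolding W_def using \<phi> by (intro sum_mono mult_left_le_one_le) (auto simp: norm_mult)
    finally show ?thesis .
  qed
  have u: "cmod (u k) \<le> 1" for k
    by (simp add: u_def norm_sgn)
  have error: "cmod (\<Sum>k<L. u k * (of_nat L * f k - D k)) \<le> real L * W"
  proof -
    have "cmod (\<Sum>k<L. u k * (of_nat L * f k - D k)) \<le> (\<Sum>k<L. W)"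
      using order_trans[OF mult_left_le_one_le[OF norm_ge_zero norm_ge_zero u] D]
      by (intro order_trans[OF norm_sum] sum_mono) (simp add: norm_mult)
    then show ?thesis
      by simp
  qed
  have main: "cmod (complex_of_real (real L * (\<Sum>k<L. cmod (f k)))) = real L * (\<Sum>k<L. cmod (f k))"
    unfolding norm_of_real by (simp add: sum_nonneg)
  have "(\<Sum>k<L. u k * D k) = of_real (real L * (\<Sum>k<L. cmod (f k))) - (\<Sum>k<L. u k * (of_nat L * f k - D k))"
    by (simp add: algebra_simps sum_subtractf sum_distrib_left u_def mult_cnj_sgn)
  then have "real L * ((\<Sum>k<L. cmod (f k)) - W) \<le> cmod (\<Sum>k<L. u k * D k)"
    using norm_triangle_ineq2[of "complex_of_real (real L * (\<Sum>k<L. cmod (f k)))"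
        "\<Sum>k<L. u k * (of_nat L * f k - D k)"] main error by (simp add: right_diff_distrib)
  then show ?thesis
    using L unfolding toeplitz_fourier_block_sum u_def D_def W_def by (simp add: norm_divide field_simps)
qed

lemma toeplitz_schur_witness:
  assumes S: "finite S" "S \<noteq> {}"
  shows "\<exists>L. \<forall>b0. \<exists>X T. schur_witness (toeplitz_pattern S) (sqrt (card S) / 4) {b0..<b0 + L} X T"
proof -
  define W where "W = (\<Sum>s\<in>S. \<bar>real_of_int s\<bar>)"
  define L where "L = Suc (nat \<lceil>4 * W\<rceil>)"
  have L: "L \<ge> 1" "W \<le> real L / 4"
    by (simp_all add: L_def) linarith
  obtain \<phi> where \<phi>: "\<And>s. cmod (\<phi> s) \<le> 1"
    and large: "real L * (5 / 9 * sqrt (card S)) \<le> (\<Sum>k<L. cmod (\<Sum>s\<in>S. \<phi> s * fourier_char L (real k * of_int s)))"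
    using exists_bounded_coeffs_sum_norm_ge[OF S, of "{..<L}" "\<lambda>k s. fourier_char L (real k * of_int s)"]
    by auto
  define u where "u = (\<lambda>k. cnj (sgn (\<Sum>s\<in>S. \<phi> s * fourier_char L (real k * of_int s))))"
  have "\<exists>X T. schur_witness (toeplitz_pattern S) (sqrt (card S) / 4) {b0..<b0 + L} X T" for b0
  proof (intro exI conjI)
    define X where "X = toeplitz_matrix \<phi> S"
    define T where "T = fourier_block L b0 u"
    have "sqrt (card S) \<ge> 1"
      using S by (simp add: Suc_le_eq card_gt_0_iff)
    then have "real L * 1 \<le> real L * sqrt (card S)"
      by (intro mult_left_mono) simp_all
    then have "real L * sqrt (card S) / 4 \<le> (\<Sum>k<L. cmod (\<Sum>s\<in>S. \<phi> s * fourier_char L (real k * of_int s))) - W"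
      using large L(2) by linarith
    also have "\<dots> \<le> cmod (\<Sum>i\<in>{b0..<b0 + L}. \<Sum>j\<in>{b0..<b0 + L}. X i j * T i j)"
      using toeplitz_fourier_block_sum_ge[of S \<phi> L b0] S(1) \<phi> L(1) by (simp add: X_def T_def u_def W_def)
    finally have "ereal (sqrt (card S) / 4)
        \<le> ereal (cmod (\<Sum>i\<in>{b0..<b0 + L}. \<Sum>j\<in>{b0..<b0 + L}. X i j * T i j) / card {b0..<b0 + L})"
      using L(1) by (simp add: field_simps)
    also have "\<dots> \<le> mat_norm (\<lambda>i j. X i j * T i j)"
      using L(1) by (intro mat_norm_ge_block_average) auto
    moreover have "X \<in> schur_class (toeplitz_pattern S)"
      unfolding X_def using \<phi> by (rule toeplitz_matrix_in_schur_class)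
    moreover have "mat_norm T \<le> 1"
      unfolding T_def using L(1) by (rule mat_norm_fourier_block_le_1) (simp add: u_def norm_sgn)
    moreover have "\<forall>i j. i \<notin> {b0..<b0 + L} \<longrightarrow> T i j = 0"
      by (auto simp: T_def fourier_block_def)
    ultimately show "schur_witness (toeplitz_pattern S) (sqrt (card S) / 4) {b0..<b0 + L} X T"
      unfolding schur_witness_def by (blast intro: order_trans)
  qed
  then show ?thesis
    by blast
qed

lemma schur_sup_toeplitz_ge:
  assumes "finite S"
  shows "ereal (1 / 4) * sqrt_card S \<le> schur_sup (toeplitz_pattern S)"
proof (cases "S = {}")
  case True
  then show ?thesis
    using schur_witness_le_schur_sup[OF schur_witness_zero] by (simp add: sqrt_card_def)
next
  case False
  then obtain L X T where "schur_witness (toeplitz_pattern S) (sqrt (card S) / 4) {0..<L} X T"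
    using toeplitz_schur_witness[OF assms] by fastforce
  then show ?thesis
    using schur_witness_le_schur_sup assms by (simp add: sqrt_card_def)
qed

lemma toeplitz_schur_norm_infinite:
  assumes "infinite S"
  shows "\<exists>X \<in> schur_class (toeplitz_pattern S). schur_norm X = \<infinity>"
proof (rule schur_norm_infinite_if_block_witnesses)
  fix c :: real
  obtain S' where S': "finite S'" "card S' = Suc (nat \<lceil>4 * c\<rceil> ^ 2)" "S' \<subseteq> S"
    using infinite_arbitrarily_large[OF assms] by blast
  then have "S' \<noteq> {}"
    by auto
  have "4 * c \<le> real (nat \<lceil>4 * c\<rceil>)"
    by linarith
  also have "\<dots> \<le> sqrt (card S')"
    using S'(2) by (simp add: real_le_rsqrt)
  finally have "c \<le> sqrt (card S') / 4"
    by simp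
  moreover have "toeplitz_pattern S' \<subseteq> toeplitz_pattern S"
    using S'(3) by (auto simp: toeplitz_pattern_def)
  ultimately show "\<exists>L. \<forall>b0. \<exists>X T. schur_witness (toeplitz_pattern S) c {b0..<b0 + L} X T"
    using toeplitz_schur_witness[OF S'(1) \<open>S' \<noteq> {}\<close>] schur_witness_mono by meson
qed

theorem proposition3p2:
  fixes S :: "int set"
  shows "ereal (1/4) * sqrt_card S \<le> schur_sup (toeplitz_pattern S)
       \<and> schur_sup (toeplitz_pattern S) \<le> sqrt_card S
       \<and> (infinite S \<longrightarrow> \<not> schur_bounded (toeplitz_pattern S))"
proof (cases "finite S")
  case True
  then show ?thesis
    using schur_sup_toeplitz_ge schur_sup_toeplitz_le by blast
next
  case False
  then obtain X where X: "X \<in> schur_class (toeplitz_pattern S)" "schur_norm X = \<infinity>"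
    using toeplitz_schur_norm_infinite by blast
  then have "schur_sup (toeplitz_pattern S) = \<infinity>"
    unfolding schur_sup_def by (metis SUP_upper top.extremum_uniqueI top_ereal_def)
  with False X show ?thesis
    by (auto simp: sqrt_card_def schur_bounded_def)
qed

end
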